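(* Let $P$ be a poset, $\mathcal F$ a standard collection of upsets of $P$ and $\mathcal I$ a standard collection of downsets of $P$, and let $e:P\to C$ be a canonical extension of $P$ with respect to $(\mathcal F,\mathcal I)$. Regard $\mathcal I$ as a poset ordered by inclusion and $\mathcal F$ as a poset ordered by reverse inclusion. Define $e_{\mathcal I}:P\to\mathcal I$ by $e_{\mathcal I}(p)=p^\downarrow$, $e_{\mathcal F}:P\to\mathcal F$ by $e_{\mathcal F}(p)=p^\uparrow$, $\pi_{\mathcal I}:\mathcal I\to C$ by $\pi_{\mathcal I}(I)=\bigvee e[I]$ and $\pi_{\mathcal F}:\mathcal F\to C$ by $\pi_{\mathcal F}(F)=\bigwedge e[F]$. Then: (1) $\pi_{\mathcal F}$ and $\pi_{\mathcal I}$ are order-embeddings. (2) If $S\subseteq P$ and $\bigwedge e_{\mathcal F}[S]$ exists in $\mathcal F$, then $\bigwedge\pi_{\mathcal F}\circ e_{\mathcal F}[S]=\pi_{\mathcal F}(\bigwedge e_{\mathcal F}[S])$ in $C$. Similarly, if $T\subseteq P$ and $\bigvee e_{\mathcal I}[T]$ exists in $\mathcal I$, then $\bigvee\pi_{\mathcal I}\circ e_{\mathcal I}[T]=\pi_{\mathcal I}(\bigvee e_{\mathcal I}[T])$ in $C$.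
   Context: For $p\in P$, $p^\uparrow=\{q\in P:q\ge p\}$ and $p^\downarrow=\{q\in P:q\le p\}$. A collection of upsets of $P$ is standard if it contains every principal upset $p^\uparrow$; a collection of downsets is standard if it contains every $p^\downarrow$. A completion of $P$ is an order-embedding $e:P\to C$ into a complete lattice. A canonical extension of $P$ with respect to $(\mathcal F,\mathcal I)$ is a completion $e:P\to C$ such that (i) ($(\mathcal F,\mathcal I)$-dense) every $z\in C$ satisfies $z=\bigvee\{\bigwedge e[F]:F\in\mathcal F,\ \bigwedge e[F]\le z\}=\bigwedge\{\bigvee e[I]:I\in\mathcal I,\ \bigvee e[I]\ge z\}$, and (ii) ($(\mathcal F,\mathcal I)$-compact) whenever $F\in\mathcal F$, $I\in\mathcal I$ and $\bigwedge e[F]\le\bigvee e[I]$, then $F\cap I\ne\emptyset$. *)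

theory Defs
  imports Main
begin

text \<open>The poset P is the carrier of a type of class order (P = UNIV);
  the complete lattice C is a type of class complete_lattice.\<close>

definition up :: "'a::order \<Rightarrow> 'a set" where
  "up p = {q. q \<ge> p}"

definition down :: "'a::order \<Rightarrow> 'a set" where
  "down p = {q. q \<le> p}"

definition upset :: "'a::order set \<Rightarrow> bool" where
  "upset U \<longleftrightarrow> (\<forall>x y. x \<in> U \<longrightarrow> x \<le> y \<longrightarrow> y \<in> U)"

definition downset :: "'a::order set \<Rightarrow> bool" where
  "downset D \<longleftrightarrow> (\<forall>x y. x \<in> D \<longrightarrow> y \<le> x \<longrightarrow> y \<in> D)"

definition standard_upsets :: "'a::order set set \<Rightarrow> bool" where
  "standard_upsets \<F> \<longleftrightarrow> (\<forall>F\<in>\<F>. upset F) \<and> (\<forall>p. up p \<in> \<F>)"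

definition standard_downsets :: "'a::order set set \<Rightarrow> bool" where
  "standard_downsets \<I> \<longleftrightarrow> (\<forall>I\<in>\<I>. downset I) \<and> (\<forall>p. down p \<in> \<I>)"

definition order_embedding :: "('a::order \<Rightarrow> 'b::order) \<Rightarrow> bool" where
  "order_embedding f \<longleftrightarrow> (\<forall>x y. f x \<le> f y \<longleftrightarrow> x \<le> y)"

definition completion :: "('a::order \<Rightarrow> 'c::complete_lattice) \<Rightarrow> bool" where
  "completion e \<longleftrightarrow> order_embedding e"

definition FI_dense ::
  "'a::order set set \<Rightarrow> 'a set set \<Rightarrow> ('a \<Rightarrow> 'c::complete_lattice) \<Rightarrow> bool" where
  "FI_dense \<F> \<I> e \<longleftrightarrow>
     (\<forall>z. z = Sup {Inf (e ` F) | F. F \<in> \<F> \<and> Inf (e ` F) \<le> z}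
        \<and> z = Inf {Sup (e ` I) | I. I \<in> \<I> \<and> z \<le> Sup (e ` I)})"

definition FI_compact ::
  "'a::order set set \<Rightarrow> 'a set set \<Rightarrow> ('a \<Rightarrow> 'c::complete_lattice) \<Rightarrow> bool" where
  "FI_compact \<F> \<I> e \<longleftrightarrow>
     (\<forall>F\<in>\<F>. \<forall>I\<in>\<I>. Inf (e ` F) \<le> Sup (e ` I) \<longrightarrow> F \<inter> I \<noteq> {})"

definition canonical_extension ::
  "'a::order set set \<Rightarrow> 'a set set \<Rightarrow> ('a \<Rightarrow> 'c::complete_lattice) \<Rightarrow> bool" where
  "canonical_extension \<F> \<I> e \<longleftrightarrow> completion e \<and> FI_dense \<F> \<I> e \<and> FI_compact \<F> \<I> e"

definition is_glb_in :: "'b set \<Rightarrow> ('b \<Rightarrow> 'b \<Rightarrow> bool) \<Rightarrow> 'b set \<Rightarrow> 'b \<Rightarrow> bool" where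
  "is_glb_in A le X m \<longleftrightarrow> m \<in> A \<and> (\<forall>x\<in>X. le m x)
     \<and> (\<forall>b\<in>A. (\<forall>x\<in>X. le b x) \<longrightarrow> le b m)"

definition is_lub_in :: "'b set \<Rightarrow> ('b \<Rightarrow> 'b \<Rightarrow> bool) \<Rightarrow> 'b set \<Rightarrow> 'b \<Rightarrow> bool" where
  "is_lub_in A le X m \<longleftrightarrow> m \<in> A \<and> (\<forall>x\<in>X. le x m)
     \<and> (\<forall>b\<in>A. (\<forall>x\<in>X. le x b) \<longrightarrow> le m b)"

definition F_le :: "'a set \<Rightarrow> 'a set \<Rightarrow> bool" where
  "F_le F G \<longleftrightarrow> G \<subseteq> F"

definition I_le :: "'a set \<Rightarrow> 'a set \<Rightarrow> bool" where
  "I_le I J \<longleftrightarrow> I \<subseteq> J"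

definition e_F :: "'a::order \<Rightarrow> 'a set" where "e_F p = up p"
definition e_I :: "'a::order \<Rightarrow> 'a set" where "e_I p = down p"
definition pi_F :: "('a \<Rightarrow> 'c::complete_lattice) \<Rightarrow> 'a set \<Rightarrow> 'c" where
  "pi_F e F = Inf (e ` F)"
definition pi_I :: "('a \<Rightarrow> 'c::complete_lattice) \<Rightarrow> 'a set \<Rightarrow> 'c" where
  "pi_I e I = Sup (e ` I)"

end

theory Submission
  imports Defs
begin

text \<open>Compactness against the principal sets \<open>p\<^sup>\<down>\<close> and \<open>p\<^sup>\<up>\<close>, whose images have
  join and meet \<open>e p\<close>, shows that a set of \<open>\<F>\<close> is recovered from its image:
  \<open>\<And>e[F] \<le> e p\<close> forces \<open>p \<in> F\<close>, and dually for \<open>\<I>\<close>. This makes \<open>\<pi>\<^sub>\<F>\<close> and \<open>\<pi>\<^sub>\<I>\<close>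
  order-embeddings. For meets, a member \<open>F\<close> of \<open>\<F>\<close> with \<open>\<And>e[F] \<le> \<And>e[S]\<close> contains
  \<open>S\<close>, hence contains the meet \<open>M\<close> of the \<open>p\<^sup>\<up>\<close> (\<open>p \<in> S\<close>) in \<open>\<F>\<close>; so by density
  \<open>\<And>e[S]\<close>, the join of all such \<open>\<And>e[F]\<close>, lies below \<open>\<And>e[M]\<close>. Joins are dual.\<close>

lemma order_embedding_imp_mono: "order_embedding f \<Longrightarrow> mono f"
  unfolding order_embedding_def by (simp add: monoI)

lemma Sup_image_down:
  fixes e :: "'a::order \<Rightarrow> 'c::complete_lattice"
  assumes "mono e"
  shows "Sup (e ` down p) = e p"
proof (rule antisym)
  show "Sup (e ` down p) \<le> e p"
    using assms by (auto simp: down_def mono_def intro: Sup_least)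
  show "e p \<le> Sup (e ` down p)"
    by (simp add: down_def Sup_upper)
qed

lemma Inf_image_up:
  fixes e :: "'a::order \<Rightarrow> 'c::complete_lattice"
  assumes "mono e"
  shows "Inf (e ` up p) = e p"
proof (rule antisym)
  show "Inf (e ` up p) \<le> e p"
    by (simp add: up_def Inf_lower)
  show "e p \<le> Inf (e ` up p)"
    using assms by (auto simp: up_def mono_def intro: Inf_greatest)
qed

lemma upset_up_subset_iff: "upset U \<Longrightarrow> up p \<subseteq> U \<longleftrightarrow> p \<in> U"
  by (auto simp: upset_def up_def)

lemma downset_down_subset_iff: "downset D \<Longrightarrow> down p \<subseteq> D \<longleftrightarrow> p \<in> D"
  by (auto simp: downset_def down_def)

lemma is_glb_in_e_F:
  assumes "standard_upsets \<F>" and "is_glb_in \<F> F_le (e_F ` S) M"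
  shows "M \<in> \<F>" and "S \<subseteq> M" and "\<And>B. B \<in> \<F> \<Longrightarrow> S \<subseteq> B \<Longrightarrow> M \<subseteq> B"
proof -
  have bound_iff: "(\<forall>x\<in>e_F ` S. F_le B x) \<longleftrightarrow> S \<subseteq> B" if "B \<in> \<F>" for B
    using that assms(1) upset_up_subset_iff
    by (fastforce simp: standard_upsets_def F_le_def e_F_def)
  show "M \<in> \<F>" using assms(2) by (simp add: is_glb_in_def)
  then show "S \<subseteq> M" and "\<And>B. B \<in> \<F> \<Longrightarrow> S \<subseteq> B \<Longrightarrow> M \<subseteq> B"
    using assms(2) bound_iff by (auto simp: is_glb_in_def F_le_def)
qed

lemma is_lub_in_e_I:
  assumes "standard_downsets \<I>" and "is_lub_in \<I> I_le (e_I ` T) M"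
  shows "M \<in> \<I>" and "T \<subseteq> M" and "\<And>B. B \<in> \<I> \<Longrightarrow> T \<subseteq> B \<Longrightarrow> M \<subseteq> B"
proof -
  have bound_iff: "(\<forall>x\<in>e_I ` T. I_le x B) \<longleftrightarrow> T \<subseteq> B" if "B \<in> \<I>" for B
    using that assms(1) downset_down_subset_iff
    by (fastforce simp: standard_downsets_def I_le_def e_I_def)
  show "M \<in> \<I>" using assms(2) by (simp add: is_lub_in_def)
  then show "T \<subseteq> M" and "\<And>B. B \<in> \<I> \<Longrightarrow> T \<subseteq> B \<Longrightarrow> M \<subseteq> B"
    using assms(2) bound_iff by (auto simp: is_lub_in_def I_le_def)
qed

locale standard_canonical_extension =
  fixes \<F> \<I> :: "'a::order set set" and e :: "'a \<Rightarrow> 'c::complete_lattice"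
  assumes standard_upsets: "standard_upsets \<F>"
    and standard_downsets: "standard_downsets \<I>"
    and canonical_extension: "canonical_extension \<F> \<I> e"
begin

lemma mono_e: "mono e"
  using canonical_extension
  by (simp add: canonical_extension_def completion_def order_embedding_imp_mono)

lemma dense: "FI_dense \<F> \<I> e"
  using canonical_extension by (simp add: canonical_extension_def)

lemma compact: "F \<in> \<F> \<Longrightarrow> I \<in> \<I> \<Longrightarrow> Inf (e ` F) \<le> Sup (e ` I) \<Longrightarrow> F \<inter> I \<noteq> {}"
  using canonical_extension by (simp add: canonical_extension_def FI_compact_def)

lemma mem_if_Inf_image_le:
  assumes "F \<in> \<F>" and "Inf (e ` F) \<le> e p"
  shows "p \<in> F"
proof -
  have "Inf (e ` F) \<le> Sup (e ` down p)"
    using assms(2) by (simp add: Sup_image_down[OF mono_e])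
  moreover have "down p \<in> \<I>"
    using standard_downsets by (simp add: standard_downsets_def)
  ultimately have "F \<inter> down p \<noteq> {}"
    using compact assms(1) by blast
  moreover have "upset F"
    using standard_upsets assms(1) by (simp add: standard_upsets_def)
  ultimately show ?thesis
    by (auto simp: down_def upset_def)
qed

lemma mem_if_le_Sup_image:
  assumes "I \<in> \<I>" and "e p \<le> Sup (e ` I)"
  shows "p \<in> I"
proof -
  have "Inf (e ` up p) \<le> Sup (e ` I)"
    using assms(2) by (simp add: Inf_image_up[OF mono_e])
  moreover have "up p \<in> \<F>"
    using standard_upsets by (simp add: standard_upsets_def)
  ultimately have "up p \<inter> I \<noteq> {}"
    using compact assms(1) by blast
  moreover have "downset I"
    using standard_downsets assms(1) by (simp add: standard_downsets_def)
  ultimately show ?thesis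
    by (auto simp: up_def downset_def)
qed

lemma subset_if_Inf_image_le:
  assumes "F \<in> \<F>" and "Inf (e ` F) \<le> Inf (e ` S)"
  shows "S \<subseteq> F"
  using assms by (meson INF_lower order_trans mem_if_Inf_image_le subsetI)

lemma subset_if_Sup_image_le:
  assumes "I \<in> \<I>" and "Sup (e ` T) \<le> Sup (e ` I)"
  shows "T \<subseteq> I"
  using assms by (meson SUP_upper order_trans mem_if_le_Sup_image subsetI)

lemma pi_F_le_iff: "F \<in> \<F> \<Longrightarrow> G \<in> \<F> \<Longrightarrow> pi_F e F \<le> pi_F e G \<longleftrightarrow> F_le F G"
  unfolding pi_F_def F_le_def
  by (meson INF_superset_mono order_refl subset_if_Inf_image_le)

lemma pi_I_le_iff: "I \<in> \<I> \<Longrightarrow> J \<in> \<I> \<Longrightarrow> pi_I e I \<le> pi_I e J \<longleftrightarrow> I_le I J"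
  unfolding pi_I_def I_le_def
  by (meson SUP_subset_mono order_refl subset_if_Sup_image_le)

lemma Inf_pi_F_e_F:
  assumes glb: "is_glb_in \<F> F_le (e_F ` S) M"
  shows "Inf ((pi_F e \<circ> e_F) ` S) = pi_F e M"
proof -
  note M = is_glb_in_e_F[OF standard_upsets glb]
  have "(pi_F e \<circ> e_F) ` S = e ` S"
    by (simp add: pi_F_def e_F_def Inf_image_up[OF mono_e])
  moreover have "Inf (e ` M) \<le> Inf (e ` S)"
    using M(2) by (simp add: INF_superset_mono)
  moreover have "Inf (e ` S) \<le> Inf (e ` M)"
  proof -
    have "Inf (e ` S) = Sup {Inf (e ` F) | F. F \<in> \<F> \<and> Inf (e ` F) \<le> Inf (e ` S)}"
      using dense unfolding FI_dense_def by blast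
    also have "\<dots> \<le> Inf (e ` M)"
    proof (rule Sup_least, clarify)
      fix F assume "F \<in> \<F>" and "Inf (e ` F) \<le> Inf (e ` S)"
      then have "M \<subseteq> F" using M(3) subset_if_Inf_image_le by blast
      then show "Inf (e ` F) \<le> Inf (e ` M)" by (simp add: INF_superset_mono)
    qed
    finally show ?thesis .
  qed
  ultimately show ?thesis
    by (simp add: pi_F_def)
qed

lemma Sup_pi_I_e_I:
  assumes lub: "is_lub_in \<I> I_le (e_I ` T) M"
  shows "Sup ((pi_I e \<circ> e_I) ` T) = pi_I e M"
proof -
  note M = is_lub_in_e_I[OF standard_downsets lub]
  have "(pi_I e \<circ> e_I) ` T = e ` T"
    by (simp add: pi_I_def e_I_def Sup_image_down[OF mono_e])
  moreover have "Sup (e ` T) \<le> Sup (e ` M)"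
    using M(2) by (simp add: SUP_subset_mono)
  moreover have "Sup (e ` M) \<le> Sup (e ` T)"
  proof -
    have "Sup (e ` M) \<le> Inf {Sup (e ` I) | I. I \<in> \<I> \<and> Sup (e ` T) \<le> Sup (e ` I)}"
    proof (rule Inf_greatest, clarify)
      fix I assume "I \<in> \<I>" and "Sup (e ` T) \<le> Sup (e ` I)"
      then have "M \<subseteq> I" using M(3) subset_if_Sup_image_le by blast
      then show "Sup (e ` M) \<le> Sup (e ` I)" by (simp add: SUP_subset_mono)
    qed
    also have "\<dots> = Sup (e ` T)"
      using dense unfolding FI_dense_def by metis
    finally show ?thesis .
  qed
  ultimately show ?thesis
    by (simp add: pi_I_def)
qed

end

theorem proposition5p2:
  fixes \<F> \<I> :: "'a::order set set" and e :: "'a \<Rightarrow> 'c::complete_lattice"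
  assumes "standard_upsets \<F>" and "standard_downsets \<I>"
    and "canonical_extension \<F> \<I> e"
  shows "(\<forall>F\<in>\<F>. \<forall>G\<in>\<F>. pi_F e F \<le> pi_F e G \<longleftrightarrow> F_le F G)
       \<and> (\<forall>I\<in>\<I>. \<forall>J\<in>\<I>. pi_I e I \<le> pi_I e J \<longleftrightarrow> I_le I J)
       \<and> (\<forall>S M. is_glb_in \<F> F_le (e_F ` S) M
              \<longrightarrow> Inf ((pi_F e \<circ> e_F) ` S) = pi_F e M)
       \<and> (\<forall>T M. is_lub_in \<I> I_le (e_I ` T) M
              \<longrightarrow> Sup ((pi_I e \<circ> e_I) ` T) = pi_I e M)"
proof -
  interpret standard_canonical_extension \<F> \<I> e
    using assms by unfold_locales
  show ?thesis
    using pi_F_le_iff pi_I_le_iff Inf_pi_F_e_F Sup_pi_I_e_I by blast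
qed

end
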